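(* Let $G=(V,E)$ be a finite digraph without loops in which every vertex has at least one incoming arc and at least one outgoing arc, and let $p$ be a positive integer. Then $G$ has a directed path-decomposition of width at most $p-1$ if and only if there is a processing of the queue system $Q_G$ with at most $p$ stack-up places.
   Context: A bin $b$ carries a pallet symbol $\mathit{plt}(b)$. For $G=(V,E)$ with $E=\{e_1,\ldots,e_l\}$, the queue system $Q_G=(q_1,\ldots,q_l)$ consists of sequences $q_i=(b_{2i-1},b_{2i})$ of two new distinct bins with $(\mathit{plt}(b_{2i-1}),\mathit{plt}(b_{2i}))=e_i$. For a list $Q=(q_1,\ldots,q_k)$ of sequences of pairwise distinct bins: a subsequence of $q=(b_1,\ldots,b_n)$ is a suffix $q'=(b_j,\ldots,b_n)$ (possibly empty) and $q-q'=(b_1,\ldots,b_{j-1})$; a configuration is $(Q,Q')$ with $Q'=(q'_1,\ldots,q'_k)$, $q'_j$ a subsequence of $q_j$; pallet $t$ is open in $(Q,Q')$ if some bin for $t$ lies in some $q'_i$ and some bin for $t$ lies in some $q_j-q'_j$. A transformation step removes the first bin of one nonempty $q'_i$; a processing is a sequence of transformation steps from $(Q,Q)$ to the configuration with all sequences empty; it uses at most $p$ stack-up places if every configuration along it has at most $p$ open pallets. A directed path-decomposition of $G$ is a sequence $(X_1,\ldots,X_r)$ of subsets of $V$ with: (1) $\bigcup_i X_i=V$; (2) for each arc $(u,v)$ there are $i\le j$ with $u\in X_i$, $v\in X_j$; (3) if $u\in X_i\cap X_j$, $i\le j$, then $u\in X_l$ for all $i\le l\le j$. Its width is $\max_i|X_i|-1$.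 *)

theory Defs
  imports Main
begin

text \<open>A configuration (Q,Q') is represented by the list c of the numbers of bins already removed
  from each sequence: the subsequence (suffix) q'_i is drop (c!i) (Q!i), and q_i - q'_i is
  take (c!i) (Q!i).\<close>

definition is_config :: "'b list list \<Rightarrow> nat list \<Rightarrow> bool" where
  "is_config Q c \<longleftrightarrow> length c = length Q \<and> (\<forall>i<length Q. c ! i \<le> length (Q ! i))"

definition pallet_open :: "('b \<Rightarrow> 'c) \<Rightarrow> 'b list list \<Rightarrow> nat list \<Rightarrow> 'c \<Rightarrow> bool" where
  "pallet_open plt Q c t \<longleftrightarrow>
     (\<exists>i<length Q. \<exists>b\<in>set (drop (c ! i) (Q ! i)). plt b = t) \<and>
     (\<exists>j<length Q. \<exists>b\<in>set (take (c ! j) (Q ! j)). plt b = t)"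

definition open_pallets :: "('b \<Rightarrow> 'c) \<Rightarrow> 'b list list \<Rightarrow> nat list \<Rightarrow> 'c set" where
  "open_pallets plt Q c = {t. pallet_open plt Q c t}"

definition trans_step :: "'b list list \<Rightarrow> nat list \<Rightarrow> nat list \<Rightarrow> bool" where
  "trans_step Q c c' \<longleftrightarrow> (\<exists>i<length Q. c ! i < length (Q ! i) \<and> c' = c[i := Suc (c ! i)])"

definition is_processing :: "'b list list \<Rightarrow> nat list list \<Rightarrow> bool" where
  "is_processing Q cs \<longleftrightarrow> cs \<noteq> [] \<and>
     hd cs = replicate (length Q) 0 \<and> last cs = map length Q \<and>
     (\<forall>c\<in>set cs. is_config Q c) \<and>
     (\<forall>k. Suc k < length cs \<longrightarrow> trans_step Q (cs ! k) (cs ! Suc k))"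

definition uses_at_most :: "('b \<Rightarrow> 'c) \<Rightarrow> 'b list list \<Rightarrow> nat list list \<Rightarrow> nat \<Rightarrow> bool" where
  "uses_at_most plt Q cs p \<longleftrightarrow> (\<forall>c\<in>set cs. card (open_pallets plt Q c) \<le> p)"

text \<open>For an enumeration es = [e_1,...,e_l] of the arcs, the bins are (i,0),(i,1) for i < l
  (pairwise distinct), q_i = [(i,0),(i,1)] and the pallet symbols are the endpoints of e_i.\<close>

definition QG_queues :: "('a \<times> 'a) list \<Rightarrow> (nat \<times> nat) list list" where
  "QG_queues es = map (\<lambda>i. [(i, 0), (i, 1)]) [0..<length es]"

definition QG_plt :: "('a \<times> 'a) list \<Rightarrow> nat \<times> nat \<Rightarrow> 'a" where
  "QG_plt es b = (if snd b = 0 then fst (es ! fst b) else snd (es ! fst b))"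

definition directed_path_decomposition :: "'a set \<Rightarrow> ('a \<times> 'a) set \<Rightarrow> 'a set list \<Rightarrow> bool" where
  "directed_path_decomposition V E Xs \<longleftrightarrow>
     Xs \<noteq> [] \<and> (\<forall>X\<in>set Xs. X \<subseteq> V) \<and>
     \<Union>(set Xs) = V \<and>
     (\<forall>(u, v)\<in>E. \<exists>i j. i \<le> j \<and> j < length Xs \<and> u \<in> Xs ! i \<and> v \<in> Xs ! j) \<and>
     (\<forall>u i j l. i \<le> l \<and> l \<le> j \<and> j < length Xs \<and> u \<in> Xs ! i \<and> u \<in> Xs ! j \<longrightarrow> u \<in> Xs ! l)"

definition dpd_width :: "'a set list \<Rightarrow> int" where
  "dpd_width Xs = int (Max (card ` set Xs)) - 1"

end

theory Submission
  imports Defs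
begin

text \<open>A processing of \<open>Q\<^sub>G\<close> is determined by the order in which the \<open>2|E|\<close> bins are
  removed, and after each removal the open pallets are the labels carried both by a removed
  and by a remaining bin. Since every vertex labels at least two bins, it is open just before
  or just after the removal of any of its bins, and the tail bin of an arc is removed before its
  head bin; hence the successive sets of open pallets form a directed path-decomposition.
  Conversely, given a decomposition, remove the tail bin of an arc \<open>(u, v)\<close> at time
  \<open>2 \<cdot> first(u)\<close> and its head bin at time \<open>2 \<cdot> last(v) + 1\<close>, where \<open>first\<close> and \<open>last\<close>
  delimit the bags containing a vertex: if \<open>K\<close> is the largest time removed so far, every open
  pallet lies in bag \<open>K div 2\<close>.\<close>

section \<open>Labels shared by removed and remaining bins\<close>

definition shared_labels :: "('b \<Rightarrow> 'c) \<Rightarrow> 'b set \<Rightarrow> 'b set \<Rightarrow> 'c set" where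
  "shared_labels f B R = {t. (\<exists>b\<in>B - R. f b = t) \<and> (\<exists>b\<in>R. f b = t)}"

lemma shared_labels_subset_image: "shared_labels f B R \<subseteq> f ` R"
  unfolding shared_labels_def by (auto intro: rev_image_eqI)

lemma shared_labels_convex:
  assumes "R \<subseteq> R'" "R' \<subseteq> R''" "t \<in> shared_labels f B R" "t \<in> shared_labels f B R''"
  shows "t \<in> shared_labels f B R'"
  using assms unfolding shared_labels_def by blast

lemma nth_mem_take_iff:
  assumes "distinct xs" "k < length xs"
  shows "xs ! k \<in> set (take m xs) \<longleftrightarrow> k < m"
  using assms by (auto simp: in_set_conv_nth nth_eq_iff_index_eq)

lemma shared_label_near_position:
  assumes "distinct bs" "k < length bs" "b \<in> set bs" "b \<noteq> bs ! k" "f b = f (bs ! k)"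
  shows "\<exists>j. k \<le> j \<and> j \<le> Suc k \<and> f (bs ! k) \<in> shared_labels f (set bs) (set (take j bs))"
proof (cases "b \<in> set (take k bs)")
  case True
  moreover have "bs ! k \<in> set bs - set (take k bs)"
    using assms(1,2) nth_mem_take_iff by auto
  ultimately show ?thesis
    using assms(5) unfolding shared_labels_def by fastforce
next
  case False
  have "set (take (Suc k) bs) = insert (bs ! k) (set (take k bs))"
    using assms(2) by (simp add: take_Suc_conv_app_nth)
  then have "b \<in> set bs - set (take (Suc k) bs)" "bs ! k \<in> set (take (Suc k) bs)"
    using False assms(3,4) by auto
  then show ?thesis
    using assms(5) unfolding shared_labels_def by (intro exI[of _ "Suc k"]) fastforce
qed

lemma insert_chain_prefixes:
  assumes "R 0 = {}" and "\<And>k. k < n \<Longrightarrow> \<exists>x. x \<notin> R k \<and> R (Suc k) = insert x (R k)"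
  shows "\<exists>bs. length bs = n \<and> distinct bs \<and> (\<forall>k\<le>n. R k = set (take k bs))"
  using assms(2)
proof (induction n)
  case 0
  then show ?case using assms(1) by simp
next
  case (Suc n)
  then obtain bs where bs: "length bs = n" "distinct bs" "\<forall>k\<le>n. R k = set (take k bs)"
    by (meson less_SucI)
  obtain x where x: "x \<notin> R n" "R (Suc n) = insert x (R n)"
    using Suc.prems by blast
  have "\<forall>k\<le>Suc n. R k = set (take k (bs @ [x]))"
    using bs x by (auto simp: le_Suc_eq)
  then show ?case
    using bs x by (intro exI[of _ "bs @ [x]"]) auto
qed

lemma sorted_key_take_le_drop:
  assumes "sorted (map key xs)" "x \<in> set (take m xs)" "y \<in> set (drop m xs)"
  shows "key x \<le> key y"
proof -
  have "sorted (map key (take m xs) @ map key (drop m xs))"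
    using assms(1) by (metis append_take_drop_id map_append)
  then show ?thesis
    using assms(2,3) by (auto simp: sorted_append)
qed

section \<open>Bags of a directed path-decomposition\<close>

definition first_bag :: "'a set list \<Rightarrow> 'a \<Rightarrow> nat" where
  "first_bag Xs v = Min {i. i < length Xs \<and> v \<in> Xs ! i}"

definition last_bag :: "'a set list \<Rightarrow> 'a \<Rightarrow> nat" where
  "last_bag Xs v = Max {i. i < length Xs \<and> v \<in> Xs ! i}"

lemma directed_path_decompositionD:
  assumes "directed_path_decomposition V E Xs"
  shows "Xs \<noteq> []" and "\<Union>(set Xs) = V"
    and "(u, v) \<in> E \<Longrightarrow> \<exists>i j. i \<le> j \<and> j < length Xs \<and> u \<in> Xs ! i \<and> v \<in> Xs ! j"
    and "i \<le> l \<Longrightarrow> l \<le> j \<Longrightarrow> j < length Xs \<Longrightarrow> u \<in> Xs ! i \<Longrightarrow> u \<in> Xs ! j \<Longrightarrow> u \<in> Xs ! l"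
  using assms unfolding directed_path_decomposition_def by (fast, fast, fast, meson)

lemma dpd_bags:
  assumes dpd: "directed_path_decomposition V E Xs" and "v \<in> V"
  shows dpd_last_bag_less: "last_bag Xs v < length Xs"
    and dpd_first_bag_le_last_bag: "first_bag Xs v \<le> last_bag Xs v"
    and dpd_mem_bag_iff: "j < length Xs \<Longrightarrow> v \<in> Xs ! j \<longleftrightarrow> first_bag Xs v \<le> j \<and> j \<le> last_bag Xs v"
proof -
  define I where "I = {i. i < length Xs \<and> v \<in> Xs ! i}"
  have "I \<noteq> {}"
    using directed_path_decompositionD(2)[OF dpd] \<open>v \<in> V\<close> by (auto simp: I_def in_set_conv_nth)
  moreover have "finite I"
    by (simp add: I_def)
  ultimately have first: "first_bag Xs v \<in> I" and last: "last_bag Xs v \<in> I"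
    and bounds: "\<And>i. i \<in> I \<Longrightarrow> first_bag Xs v \<le> i \<and> i \<le> last_bag Xs v"
    unfolding first_bag_def last_bag_def I_def[symmetric] by auto
  show "last_bag Xs v < length Xs" "first_bag Xs v \<le> last_bag Xs v"
    using last bounds[OF first] by (auto simp: I_def)
  assume "j < length Xs"
  then show "v \<in> Xs ! j \<longleftrightarrow> first_bag Xs v \<le> j \<and> j \<le> last_bag Xs v"
    using directed_path_decompositionD(4)[OF dpd, of "first_bag Xs v" j "last_bag Xs v" v]
      first last bounds[of j] by (auto simp: I_def)
qed

lemma dpd_arc_first_bag_le_last_bag:
  assumes dpd: "directed_path_decomposition V E Xs" and "(u, v) \<in> E"
  shows "first_bag Xs u \<le> last_bag Xs v"
proof -
  obtain i j where ij: "i \<le> j" "j < length Xs" "u \<in> Xs ! i" "v \<in> Xs ! j"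
    using directed_path_decompositionD(3)[OF dpd \<open>(u, v) \<in> E\<close>] by blast
  moreover have "i < length Xs"
    using ij by linarith
  ultimately have "u \<in> V" "v \<in> V"
    using directed_path_decompositionD(2)[OF dpd] by (metis UnionI nth_mem)+
  then show ?thesis
    using ij \<open>i < length Xs\<close> dpd_mem_bag_iff[OF dpd] by (meson order.trans)
qed

lemma dpd_width_le_iff:
  assumes "Xs \<noteq> []"
  shows "dpd_width Xs \<le> int p - 1 \<longleftrightarrow> (\<forall>X\<in>set Xs. card X \<le> p)"
proof -
  have "dpd_width Xs \<le> int p - 1 \<longleftrightarrow> Max (card ` set Xs) \<le> p"
    unfolding dpd_width_def by linarith
  also have "\<dots> \<longleftrightarrow> (\<forall>X\<in>set Xs. card X \<le> p)"
    using assms by (simp add: Max_le_iff)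
  finally show ?thesis .
qed

lemma prefix_shared_labels_decomposition:
  assumes dist: "distinct bs" and labels: "f ` set bs \<subseteq> V"
    and two: "\<And>v. v \<in> V \<Longrightarrow> \<exists>b\<in>set bs. \<exists>b'\<in>set bs. b \<noteq> b' \<and> f b = v \<and> f b' = v"
    and arcs: "\<And>u v. (u, v) \<in> E \<Longrightarrow>
      \<exists>k0 k1. k0 < k1 \<and> k1 < length bs \<and> f (bs ! k0) = u \<and> f (bs ! k1) = v"
  shows "directed_path_decomposition V E
    (map (\<lambda>k. shared_labels f (set bs) (set (take k bs))) [0..<Suc (length bs)])"
    (is "directed_path_decomposition V E ?Xs")
proof -
  let ?n = "length bs"
  have len: "length ?Xs = Suc ?n"
    by simp
  have nth: "?Xs ! k = shared_labels f (set bs) (set (take k bs))" if "k \<le> ?n" for k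
    using that by (simp del: upt_Suc add: nth_map_upt)
  have near: "\<exists>j. k \<le> j \<and> j \<le> Suc k \<and> f (bs ! k) \<in> ?Xs ! j" if k: "k < ?n" for k
  proof -
    have "f (bs ! k) \<in> V"
      using k labels by auto
    then obtain b where "b \<in> set bs" "b \<noteq> bs ! k" "f b = f (bs ! k)"
      using two by metis
    then obtain j where j: "k \<le> j" "j \<le> Suc k"
      "f (bs ! k) \<in> shared_labels f (set bs) (set (take j bs))"
      using shared_label_near_position[OF dist k] by blast
    then have "j \<le> ?n"
      using k by linarith
    then show ?thesis
      using j nth by auto
  qed
  have bags: "X \<subseteq> V" if X: "X \<in> set ?Xs" for X
  proof -
    obtain k where "X = shared_labels f (set bs) (set (take k bs))"
      using X unfolding set_map by blast
    then have "X \<subseteq> f ` set bs"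
      using shared_labels_subset_image set_take_subset by fast
    then show ?thesis
      using labels by blast
  qed
  have cover: "V \<subseteq> \<Union>(set ?Xs)"
  proof
    fix v assume "v \<in> V"
    then obtain k where k: "k < ?n" "f (bs ! k) = v"
      using two by (metis in_set_conv_nth)
    then obtain j where "j \<le> Suc k" "v \<in> ?Xs ! j"
      using near by blast
    moreover have "j < length ?Xs"
      using k \<open>j \<le> Suc k\<close> len by linarith
    ultimately show "v \<in> \<Union>(set ?Xs)"
      by (metis UnionI nth_mem)
  qed
  have arc_bags: "\<exists>i j. i \<le> j \<and> j < length ?Xs \<and> u \<in> ?Xs ! i \<and> v \<in> ?Xs ! j"
    if uv: "(u, v) \<in> E" for u v
  proof -
    obtain k0 k1 where k: "k0 < k1" "k1 < ?n" "f (bs ! k0) = u" "f (bs ! k1) = v"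
      using arcs[OF uv] by blast
    obtain j0 where "j0 \<le> Suc k0" "u \<in> ?Xs ! j0"
      using near[of k0] k by auto
    moreover obtain j1 where "k1 \<le> j1" "j1 \<le> Suc k1" "v \<in> ?Xs ! j1"
      using near[of k1] k by auto
    ultimately show ?thesis
      using k len by (intro exI[of _ j0] exI[of _ j1]) auto
  qed
  have convex: "u \<in> ?Xs ! l"
    if "i \<le> l" "l \<le> j" "j < length ?Xs" "u \<in> ?Xs ! i" "u \<in> ?Xs ! j" for u i j l
  proof -
    have "u \<in> shared_labels f (set bs) (set (take i bs))"
      "u \<in> shared_labels f (set bs) (set (take j bs))"
      using that nth len by auto
    then have "u \<in> shared_labels f (set bs) (set (take l bs))"
      using shared_labels_convex set_take_subset_set_take that(1,2) by metis
    then show ?thesis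
      using that nth len by auto
  qed
  show ?thesis
    unfolding directed_path_decomposition_def using bags cover arc_bags convex
    by (auto simp del: upt_Suc)
qed

lemma sorted_prefix_shared_labels_in_bag:
  assumes dpd: "directed_path_decomposition V E Xs" and labels: "f ` set bs \<subseteq> V"
    and sorted: "sorted (map key bs)"
    and key: "\<And>b. b \<in> set bs \<Longrightarrow>
      2 * first_bag Xs (f b) \<le> key b \<and> key b \<le> 2 * last_bag Xs (f b) + 1"
  shows "\<exists>j<length Xs. shared_labels f (set bs) (set (take k bs)) \<subseteq> Xs ! j"
proof (cases "take k bs = []")
  case True
  moreover have "Xs \<noteq> []"
    using directed_path_decompositionD(1)[OF dpd] .
  ultimately show ?thesis
    by (auto simp: shared_labels_def)
next
  case False
  define K where "K = Max (key ` set (take k bs))"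
  have "K \<in> key ` set (take k bs)"
    unfolding K_def using False by (intro Max_in) auto
  then obtain b0 where b0: "b0 \<in> set (take k bs)" "key b0 = K"
    by blast
  have "b0 \<in> set bs"
    using b0(1) by (rule in_set_takeD)
  then have "K \<le> 2 * last_bag Xs (f b0) + 1" "last_bag Xs (f b0) < length Xs"
    using b0(2) key dpd_last_bag_less[OF dpd] labels by auto
  then have j: "K div 2 < length Xs"
    by linarith
  have "t \<in> Xs ! (K div 2)" if t: "t \<in> shared_labels f (set bs) (set (take k bs))" for t
  proof -
    obtain b1 b2 where b1: "b1 \<in> set (take k bs)" "f b1 = t"
      and b2: "b2 \<in> set bs" "b2 \<notin> set (take k bs)" "f b2 = t"
      using t unfolding shared_labels_def by blast
    have "b1 \<in> set bs"
      using b1(1) by (rule in_set_takeD)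
    have "b2 \<in> set (drop k bs)"
      using b2(1,2) by (metis Un_iff append_take_drop_id set_append)
    then have "K \<le> key b2"
      using b0 sorted_key_take_le_drop[OF sorted] by metis
    moreover have "key b1 \<le> K"
      using b1(1) by (simp add: K_def)
    moreover have "2 * first_bag Xs t \<le> key b1" "key b2 \<le> 2 * last_bag Xs t + 1"
      using key[OF \<open>b1 \<in> set bs\<close>] key[OF b2(1)] b1(2) b2(3) by auto
    moreover have "t \<in> V"
      using labels b2(1,3) by blast
    ultimately show ?thesis
      using dpd_mem_bag_iff[OF dpd \<open>t \<in> V\<close> j] by linarith
  qed
  with j show ?thesis
    by blast
qed

section \<open>Removal orders of the queue system \<open>Q\<^sub>G\<close>\<close>

definition QG_bins :: "('a \<times> 'a) list \<Rightarrow> (nat \<times> nat) set" where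
  "QG_bins es = {(i, k). i < length es \<and> k < 2}"

definition removed_bins :: "('a \<times> 'a) list \<Rightarrow> nat list \<Rightarrow> (nat \<times> nat) set" where
  "removed_bins es c = {(i, k). i < length es \<and> k < c ! i}"

definition tail_closed :: "(nat \<times> nat) set \<Rightarrow> bool" where
  "tail_closed S \<longleftrightarrow> (\<forall>i. (i, 1) \<in> S \<longrightarrow> (i, 0) \<in> S)"

definition removal_order :: "('a \<times> 'a) list \<Rightarrow> (nat \<times> nat) list \<Rightarrow> bool" where
  "removal_order es bs \<longleftrightarrow>
     distinct bs \<and> set bs = QG_bins es \<and> (\<forall>k. tail_closed (set (take k bs)))"

lemma length_QG_queues [simp]: "length (QG_queues es) = length es"
  by (simp add: QG_queues_def)

lemma nth_QG_queues [simp]: "i < length es \<Longrightarrow> QG_queues es ! i = [(i, 0), (i, 1)]"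
  by (simp add: QG_queues_def)

lemma is_config_QG_iff:
  "is_config (QG_queues es) c \<longleftrightarrow> length c = length es \<and> (\<forall>i<length es. c ! i \<le> 2)"
  by (simp add: is_config_def numeral_2_eq_2)

lemma QG_plt_in_vertices:
  assumes "E \<subseteq> V \<times> V" "set es = E" "b \<in> QG_bins es"
  shows "QG_plt es b \<in> V"
proof -
  obtain i k where b: "b = (i, k)" "i < length es"
    using assms(3) by (auto simp: QG_bins_def)
  then have "es ! i \<in> V \<times> V"
    using assms(1,2) nth_mem by blast
  then show ?thesis
    using b by (auto simp: QG_plt_def)
qed

lemma QG_two_bins:
  assumes "(u, v) \<in> set es" "(v, w) \<in> set es"
  shows "\<exists>b\<in>QG_bins es. \<exists>b'\<in>QG_bins es. b \<noteq> b' \<and> QG_plt es b = v \<and> QG_plt es b' = v"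
proof -
  obtain i j where "i < length es" "es ! i = (v, w)" "j < length es" "es ! j = (u, v)"
    using assms by (metis in_set_conv_nth)
  then show ?thesis
    by (intro bexI[of _ "(i, 0)"] bexI[of _ "(j, 1)"]) (auto simp: QG_bins_def QG_plt_def)
qed

lemma open_pallets_QG:
  assumes "is_config (QG_queues es) c"
  shows "open_pallets (QG_plt es) (QG_queues es) c =
    shared_labels (QG_plt es) (QG_bins es) (removed_bins es c)"
proof -
  have c: "\<And>i. i < length es \<Longrightarrow> c ! i \<le> 2"
    using assms by (simp add: is_config_QG_iff)
  have drop: "b \<in> set (drop (c ! i) (QG_queues es ! i)) \<longleftrightarrow>
      fst b = i \<and> b \<in> QG_bins es - removed_bins es c" if "i < length es" for i b
    using that c[OF that] by (cases b; cases "c ! i"; cases "c ! i - 1")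
      (auto simp: QG_bins_def removed_bins_def)
  have take: "b \<in> set (take (c ! i) (QG_queues es ! i)) \<longleftrightarrow>
      fst b = i \<and> b \<in> removed_bins es c" if "i < length es" for i b
    using that c[OF that] by (cases b; cases "c ! i"; cases "c ! i - 1")
      (auto simp: removed_bins_def)
  have fst_less: "fst b < length es" if "b \<in> QG_bins es \<or> b \<in> removed_bins es c" for b
    using that by (auto simp: QG_bins_def removed_bins_def)
  have remaining: "(\<exists>i<length es. \<exists>b\<in>set (drop (c ! i) (QG_queues es ! i)). P b) \<longleftrightarrow>
      (\<exists>b\<in>QG_bins es - removed_bins es c. P b)" for P
    using drop fst_less by blast
  have removed: "(\<exists>i<length es. \<exists>b\<in>set (take (c ! i) (QG_queues es ! i)). P b) \<longleftrightarrow>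
      (\<exists>b\<in>removed_bins es c. P b)" for P
    using take fst_less by blast
  show ?thesis
    unfolding open_pallets_def pallet_open_def shared_labels_def length_QG_queues
    by (simp only: remaining removed)
qed

lemma removed_bins_replicate_0: "removed_bins es (replicate (length es) 0) = {}"
  by (auto simp: removed_bins_def)

lemma removed_bins_full: "removed_bins es (map length (QG_queues es)) = QG_bins es"
  by (auto simp: removed_bins_def QG_bins_def QG_queues_def)

lemma tail_closed_removed_bins: "tail_closed (removed_bins es c)"
  by (auto simp: tail_closed_def removed_bins_def)

lemma removed_bins_trans_step:
  assumes "trans_step (QG_queues es) c c'" "length c = length es"
  shows "\<exists>b. b \<notin> removed_bins es c \<and> removed_bins es c' = insert b (removed_bins es c)"
proof -
  obtain i where i: "i < length es" "c' = c[i := Suc (c ! i)]"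
    using assms(1) by (auto simp: trans_step_def)
  then have "removed_bins es c' = insert (i, c ! i) (removed_bins es c)"
    using assms(2) by (auto simp: removed_bins_def nth_list_update split: if_splits)
  then show ?thesis
    by (auto simp: removed_bins_def)
qed

lemma processing_removal_order:
  assumes "is_processing (QG_queues es) cs"
  obtains bs where "removal_order es bs" "length cs = Suc (length bs)"
    and "\<And>k. k < length cs \<Longrightarrow> removed_bins es (cs ! k) = set (take k bs)"
proof -
  define n where "n = length cs - 1"
  define R where "R k = removed_bins es (cs ! k)" for k
  have cs: "cs \<noteq> []" "hd cs = replicate (length es) 0" "last cs = map length (QG_queues es)"
    "\<And>c. c \<in> set cs \<Longrightarrow> is_config (QG_queues es) c"
    "\<And>k. Suc k < length cs \<Longrightarrow> trans_step (QG_queues es) (cs ! k) (cs ! Suc k)"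
    using assms by (auto simp: is_processing_def)
  have len: "length cs = Suc n"
    using cs(1) by (simp add: n_def)
  have "R 0 = {}"
    using cs(1,2) by (simp add: R_def hd_conv_nth removed_bins_replicate_0)
  moreover have "\<exists>x. x \<notin> R k \<and> R (Suc k) = insert x (R k)" if "k < n" for k
  proof -
    have "length (cs ! k) = length es"
      using cs(4)[of "cs ! k"] that len by (simp add: is_config_QG_iff)
    moreover have "trans_step (QG_queues es) (cs ! k) (cs ! Suc k)"
      using cs(5) that len by simp
    ultimately show ?thesis
      unfolding R_def by (rule removed_bins_trans_step[rotated])
  qed
  ultimately obtain bs where bs: "length bs = n" "distinct bs" "\<forall>k\<le>n. R k = set (take k bs)"
    using insert_chain_prefixes by blast
  have "R n = QG_bins es"
    using cs(1,3) removed_bins_full by (simp add: R_def last_conv_nth n_def)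
  then have "set bs = QG_bins es"
    using bs by simp
  moreover have "tail_closed (set (take k bs))" for k
    using bs tail_closed_removed_bins unfolding R_def
    by (metis linorder_le_cases take_all_iff)
  ultimately show ?thesis
    using that[of bs] bs len unfolding removal_order_def R_def by (simp add: less_Suc_eq_le)
qed

definition removal_config :: "('a \<times> 'a) list \<Rightarrow> (nat \<times> nat) set \<Rightarrow> nat list" where
  "removal_config es S =
     map (\<lambda>i. if (i, 1) \<in> S then 2 else if (i, 0) \<in> S then 1 else 0) [0..<length es]"

lemma is_config_removal_config: "is_config (QG_queues es) (removal_config es S)"
  by (simp add: is_config_QG_iff removal_config_def)

lemma removal_config_empty: "removal_config es {} = replicate (length es) 0"
  by (simp add: removal_config_def map_replicate_const)

lemma removal_config_QG_bins: "removal_config es (QG_bins es) = map length (QG_queues es)"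
  by (simp add: removal_config_def QG_bins_def QG_queues_def)

lemma removed_bins_removal_config:
  assumes "S \<subseteq> QG_bins es" "tail_closed S"
  shows "removed_bins es (removal_config es S) = S"
  using assms by (fastforce simp: removed_bins_def removal_config_def QG_bins_def tail_closed_def
      less_Suc_eq numeral_2_eq_2 split: if_splits)

lemma removal_config_insert_step:
  assumes "(i, j) \<in> QG_bins es" "(i, j) \<notin> S" "tail_closed S" "tail_closed (insert (i, j) S)"
  shows "trans_step (QG_queues es) (removal_config es S) (removal_config es (insert (i, j) S))"
proof -
  have "i < length es" "j = 0 \<or> j = 1"
    using assms(1) by (auto simp: QG_bins_def)
  then have "removal_config es S ! i < 2 \<and> removal_config es (insert (i, j) S) =
      (removal_config es S)[i := Suc (removal_config es S ! i)]"
    using assms(2-4)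
    by (auto simp: removal_config_def tail_closed_def nth_list_update intro!: nth_equalityI)
  then show ?thesis
    using \<open>i < length es\<close> by (auto simp: trans_step_def)
qed

lemma removal_order_processing:
  assumes "removal_order es bs"
  shows "is_processing (QG_queues es)
    (map (\<lambda>k. removal_config es (set (take k bs))) [0..<Suc (length bs)])"
    (is "is_processing _ ?cs")
proof -
  have bs: "distinct bs" "set bs = QG_bins es" "\<And>k. tail_closed (set (take k bs))"
    using assms by (auto simp: removal_order_def)
  have nth: "?cs ! k = removal_config es (set (take k bs))" if "k \<le> length bs" for k
    using that by (simp del: upt_Suc add: nth_map_upt)
  have "trans_step (QG_queues es) (?cs ! k) (?cs ! Suc k)" if "Suc k < length ?cs" for k
  proof -
    have k: "k < length bs"
      using that by simp
    then have "set (take (Suc k) bs) = insert (bs ! k) (set (take k bs))"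
      by (simp add: take_Suc_conv_app_nth)
    moreover have "bs ! k \<in> QG_bins es"
      using bs(2) k nth_mem by blast
    moreover have "bs ! k \<notin> set (take k bs)"
      using nth_mem_take_iff[OF bs(1) k] by simp
    ultimately show ?thesis
      using removal_config_insert_step bs(3) nth k by (metis Suc_leI less_imp_le_nat surj_pair)
  qed
  then show ?thesis
    unfolding is_processing_def
    using nth[of 0] nth[of "length bs"] bs(2) is_config_removal_config
    by (auto simp del: upt_Suc
        simp: hd_conv_nth last_conv_nth removal_config_empty removal_config_QG_bins)
qed

lemma QG_processing_iff_removal_order:
  "(\<exists>cs. is_processing (QG_queues es) cs \<and> uses_at_most (QG_plt es) (QG_queues es) cs p) \<longleftrightarrow>
   (\<exists>bs. removal_order es bs \<and>
      (\<forall>k\<le>length bs. card (shared_labels (QG_plt es) (QG_bins es) (set (take k bs))) \<le> p))"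
  (is "?processing \<longleftrightarrow> ?order")
proof
  assume ?processing
  then obtain cs where cs: "is_processing (QG_queues es) cs"
    "uses_at_most (QG_plt es) (QG_queues es) cs p"
    by blast
  obtain bs where bs: "removal_order es bs" "length cs = Suc (length bs)"
    "\<And>k. k < length cs \<Longrightarrow> removed_bins es (cs ! k) = set (take k bs)"
    using processing_removal_order[OF cs(1)] by blast
  have "card (shared_labels (QG_plt es) (QG_bins es) (set (take k bs))) \<le> p" if "k \<le> length bs" for k
  proof -
    have "cs ! k \<in> set cs"
      using that bs(2) by simp
    then have "is_config (QG_queues es) (cs ! k)"
      and bound: "card (open_pallets (QG_plt es) (QG_queues es) (cs ! k)) \<le> p"
      using cs unfolding is_processing_def uses_at_most_def by blast+
    moreover have "removed_bins es (cs ! k) = set (take k bs)"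
      using bs(2,3) that by simp
    ultimately show ?thesis
      using open_pallets_QG by metis
  qed
  with bs(1) show ?order
    by blast
next
  assume ?order
  then obtain bs where bs: "removal_order es bs"
    "\<forall>k\<le>length bs. card (shared_labels (QG_plt es) (QG_bins es) (set (take k bs))) \<le> p"
    by blast
  define cs where "cs = map (\<lambda>k. removal_config es (set (take k bs))) [0..<Suc (length bs)]"
  have "card (open_pallets (QG_plt es) (QG_queues es) c) \<le> p" if "c \<in> set cs" for c
  proof -
    obtain k where k: "k < Suc (length bs)" "c = removal_config es (set (take k bs))"
      using \<open>c \<in> set cs\<close> unfolding cs_def by (auto simp del: upt_Suc)
    have "set (take k bs) \<subseteq> QG_bins es" "tail_closed (set (take k bs))"
      using bs(1) set_take_subset[of k bs] by (simp_all add: removal_order_def)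
    then have "removed_bins es c = set (take k bs)"
      unfolding k(2) by (rule removed_bins_removal_config)
    moreover have "open_pallets (QG_plt es) (QG_queues es) c =
        shared_labels (QG_plt es) (QG_bins es) (removed_bins es c)"
      unfolding k(2) by (rule open_pallets_QG[OF is_config_removal_config])
    ultimately show ?thesis
      using bs(2) k(1) by (simp add: less_Suc_eq_le)
  qed
  then have "uses_at_most (QG_plt es) (QG_queues es) cs p"
    unfolding uses_at_most_def by blast
  moreover have "is_processing (QG_queues es) cs"
    unfolding cs_def by (rule removal_order_processing[OF bs(1)])
  ultimately show ?processing
    by blast
qed

lemma removal_order_tail_before_head:
  assumes "removal_order es bs" "i < length es"
  obtains k0 k1 where "k0 < k1" "k1 < length bs" "bs ! k0 = (i, 0)" "bs ! k1 = (i, 1)"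
proof -
  have bs: "distinct bs" "set bs = QG_bins es" "\<And>k. tail_closed (set (take k bs))"
    using assms(1) by (auto simp: removal_order_def)
  have "(i, 1) \<in> set bs"
    using bs(2) assms(2) by (simp add: QG_bins_def)
  then obtain k1 where k1: "k1 < length bs" "bs ! k1 = (i, 1)"
    by (auto simp: in_set_conv_nth)
  then have "(i, 1) \<in> set (take (Suc k1) bs)"
    using nth_mem_take_iff[OF bs(1)] by (metis lessI)
  then have "(i, 0) \<in> set (take (Suc k1) bs)"
    using bs(3) unfolding tail_closed_def by blast
  then obtain k0 where k0: "k0 < length bs" "bs ! k0 = (i, 0)" "k0 < Suc k1"
    using nth_mem_take_iff[OF bs(1)] by (metis in_set_conv_nth in_set_takeD)
  moreover have "k0 \<noteq> k1"
    using k0(2) k1(2) by auto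
  ultimately have "k0 < k1"
    by simp
  with k0 k1 that show ?thesis
    by blast
qed

lemma removal_order_decomposition:
  assumes EV: "E \<subseteq> V \<times> V" and deg: "\<forall>v\<in>V. (\<exists>u. (u, v) \<in> E) \<and> (\<exists>w. (v, w) \<in> E)"
    and es: "set es = E" and bs: "removal_order es bs"
    and bound: "\<forall>k\<le>length bs. card (shared_labels (QG_plt es) (QG_bins es) (set (take k bs))) \<le> p"
  shows "\<exists>Xs. directed_path_decomposition V E Xs \<and> dpd_width Xs \<le> int p - 1"
proof -
  have dist: "distinct bs" and set_bs: "set bs = QG_bins es"
    using bs by (auto simp: removal_order_def)
  define Xs where
    "Xs = map (\<lambda>k. shared_labels (QG_plt es) (set bs) (set (take k bs))) [0..<Suc (length bs)]"
  have "directed_path_decomposition V E Xs"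
    unfolding Xs_def
  proof (rule prefix_shared_labels_decomposition[OF dist])
    show "QG_plt es ` set bs \<subseteq> V"
      using QG_plt_in_vertices[OF EV es] set_bs by blast
    show "\<exists>b\<in>set bs. \<exists>b'\<in>set bs. b \<noteq> b' \<and> QG_plt es b = v \<and> QG_plt es b' = v"
      if v: "v \<in> V" for v
    proof -
      obtain u w where "(u, v) \<in> set es" "(v, w) \<in> set es"
        using deg v es by blast
      then have
        "\<exists>b\<in>QG_bins es. \<exists>b'\<in>QG_bins es. b \<noteq> b' \<and> QG_plt es b = v \<and> QG_plt es b' = v"
        by (rule QG_two_bins)
      then show ?thesis
        by (simp only: set_bs)
    qed
    show "\<exists>k0 k1. k0 < k1 \<and> k1 < length bs \<and>
        QG_plt es (bs ! k0) = u \<and> QG_plt es (bs ! k1) = v"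
      if uv: "(u, v) \<in> E" for u v
    proof -
      obtain i where i: "i < length es" "es ! i = (u, v)"
        using uv es by (auto simp: in_set_conv_nth)
      obtain k0 k1 where "k0 < k1" "k1 < length bs" "bs ! k0 = (i, 0)" "bs ! k1 = (i, 1)"
        by (rule removal_order_tail_before_head[OF bs i(1)])
      then show ?thesis
        using i(2) by (intro exI[of _ k0] exI[of _ k1]) (simp add: QG_plt_def)
    qed
  qed
  moreover have "card X \<le> p" if X: "X \<in> set Xs" for X
  proof -
    obtain k where "k < Suc (length bs)" "X = shared_labels (QG_plt es) (set bs) (set (take k bs))"
      using X unfolding Xs_def by (auto simp del: upt_Suc)
    then show ?thesis
      using bound set_bs by simp
  qed
  then have "dpd_width Xs \<le> int p - 1"
    using dpd_width_le_iff[of Xs p] by (simp add: Xs_def)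
  ultimately show ?thesis
    by blast
qed

lemma decomposition_removal_order:
  assumes fin: "finite V" and EV: "E \<subseteq> V \<times> V" and es: "set es = E"
    and dpd: "directed_path_decomposition V E Xs" and width: "dpd_width Xs \<le> int p - 1"
  shows "\<exists>bs. removal_order es bs \<and>
    (\<forall>k\<le>length bs. card (shared_labels (QG_plt es) (QG_bins es) (set (take k bs))) \<le> p)"
proof -
  \<comment> \<open>Doubling with offset 1 puts the tail bin of an arc \<open>(u, v)\<close> strictly before its head
    bin even when \<open>first_bag Xs u = last_bag Xs v\<close>.\<close>
  define key where "key b = (if snd b = 0 then 2 * first_bag Xs (QG_plt es b)
    else 2 * last_bag Xs (QG_plt es b) + 1)" for b
  define bs where "bs = sort_key key (List.product [0..<length es] [0, 1])"
  have set_bs: "set bs = QG_bins es"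
    by (auto simp: bs_def QG_bins_def)
  have sorted: "sorted (map key bs)"
    by (simp add: bs_def)
  have labels: "QG_plt es ` set bs \<subseteq> V"
    using QG_plt_in_vertices[OF EV es] set_bs by blast
  have key_range:
    "2 * first_bag Xs (QG_plt es b) \<le> key b \<and> key b \<le> 2 * last_bag Xs (QG_plt es b) + 1"
    if "b \<in> set bs" for b
    using dpd_first_bag_le_last_bag[OF dpd, of "QG_plt es b"] labels that by (auto simp: key_def)
  have tail_key: "key (i, 0) < key (i, 1)" if "i < length es" for i
  proof -
    have "es ! i \<in> E"
      using that es nth_mem by blast
    then have "first_bag Xs (fst (es ! i)) \<le> last_bag Xs (snd (es ! i))"
      using dpd_arc_first_bag_le_last_bag[OF dpd] by (metis prod.collapse)
    then show ?thesis
      by (simp add: key_def QG_plt_def)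
  qed
  have "tail_closed (set (take k bs))" for k
    unfolding tail_closed_def
  proof (intro allI impI)
    fix i assume head: "(i, 1) \<in> set (take k bs)"
    then have "i < length es"
      using set_bs in_set_takeD by (fastforce simp: QG_bins_def)
    then have "(i, 0) \<in> set bs"
      using set_bs by (simp add: QG_bins_def)
    moreover have "(i, 0) \<notin> set (drop k bs)"
      using sorted_key_take_le_drop[OF sorted head] tail_key[OF \<open>i < length es\<close>] by fastforce
    ultimately show "(i, 0) \<in> set (take k bs)"
      by (metis Un_iff append_take_drop_id set_append)
  qed
  then have "removal_order es bs"
    using set_bs by (simp add: removal_order_def bs_def distinct_product)
  moreover have "card (shared_labels (QG_plt es) (QG_bins es) (set (take k bs))) \<le> p" for k
  proof -
    obtain j where j: "j < length Xs"
      "shared_labels (QG_plt es) (set bs) (set (take k bs)) \<subseteq> Xs ! j"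
      using sorted_prefix_shared_labels_in_bag[OF dpd labels sorted key_range] by blast
    moreover have "finite (Xs ! j)"
      using j(1) directed_path_decompositionD(2)[OF dpd] fin
      by (meson Sup_upper finite_subset nth_mem)
    moreover have "card (Xs ! j) \<le> p"
      using width dpd_width_le_iff directed_path_decompositionD(1)[OF dpd] j(1) nth_mem by blast
    ultimately show ?thesis
      using set_bs card_mono order_trans by metis
  qed
  ultimately show ?thesis
    by blast
qed

theorem lemma4:
  fixes V :: "'a set" and E :: "('a \<times> 'a) set" and es :: "('a \<times> 'a) list" and p :: nat
  assumes "finite V"
    and "E \<subseteq> V \<times> V"
    and "\<forall>v. (v, v) \<notin> E"
    and "\<forall>v\<in>V. (\<exists>u. (u, v) \<in> E) \<and> (\<exists>w. (v, w) \<in> E)"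
    and "distinct es" and "set es = E"
    and "p > 0"
  shows "(\<exists>Xs. directed_path_decomposition V E Xs \<and> dpd_width Xs \<le> int p - 1) \<longleftrightarrow>
         (\<exists>cs. is_processing (QG_queues es) cs \<and> uses_at_most (QG_plt es) (QG_queues es) cs p)"
proof -
  have "(\<exists>Xs. directed_path_decomposition V E Xs \<and> dpd_width Xs \<le> int p - 1) \<longleftrightarrow>
      (\<exists>bs. removal_order es bs \<and>
        (\<forall>k\<le>length bs. card (shared_labels (QG_plt es) (QG_bins es) (set (take k bs))) \<le> p))"
    using decomposition_removal_order[OF assms(1,2,6)] removal_order_decomposition[OF assms(2,4,6)]
    by blast
  also have "\<dots> \<longleftrightarrow>
      (\<exists>cs. is_processing (QG_queues es) cs \<and> uses_at_most (QG_plt es) (QG_queues es) cs p)"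
    by (rule QG_processing_iff_removal_order[symmetric])
  finally show ?thesis .
qed

end
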